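(* Let $p$ be a prime and write $T_p(z)=\prod_{j=1}^{\infty}(1-z^{p^{j}})^{-1/p^{j}}=\sum_{n\ge0}t_p(n)z^n$ for $|z|<1$. For all $n\ge0$, the coefficient $t_p(n)$ is a rational number whose denominator contains no prime factor other than $p$; that is, \[ t_p(n)\in\left\{\frac{a}{p^k}: a\in\mathbb{Z},\ k\ge 0\right\}. \]
   Context: For $|z|<1$, each factor $(1-z^{p^j})^{-1/p^j}$ is defined using the principal branch; the product converges absolutely and defines an analytic function on the open unit disk, whose Taylor expansion at $0$ has coefficients $t_p(n)$. *)

theory Defs
  imports "HOL-Analysis.Analysis" "HOL-Computational_Algebra.Primes"
begin

text \<open>T_p(z) = prod_{j>=1} (1 - z^(p^j))^(-1/p^j), principal branch (complex powr uses Ln).\<close>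
definition Tp :: "nat \<Rightarrow> complex \<Rightarrow> complex" where
  "Tp p z = prodinf (\<lambda>j. (1 - z ^ (p ^ Suc j)) powr (- 1 / of_nat (p ^ Suc j)))"

definition tp :: "nat \<Rightarrow> nat \<Rightarrow> complex" where
  "tp p n = (deriv ^^ n) (Tp p) 0 / fact n"

end

theory Submission
  imports Defs "HOL-Complex_Analysis.Complex_Analysis"
begin

(*
  The j-th factor of T_p is the binomial series (1 + x)^(-1/q), q = p^(j+1), evaluated at
  x = -z^q. Its coefficient series B satisfies B^q = 1/(1 + x), which has integer coefficients,
  and B_0 = 1. Comparing n-th coefficients of B^q and of T^q, where T is B truncated below
  degree n, gives q B_n = (B^q)_n - (T^q)_n, a polynomial over \<int> in B_0, ..., B_(n-1); so by
  induction every B_n lies in \<int>[1/p]. The j-th factor is 1 + O(z^q), so only the first n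
  factors contribute to the n-th coefficient, and uniform convergence of the product near 0
  identifies the Taylor coefficients of T_p with those of this finite product.
*)

definition Ints_div_pow :: "nat \<Rightarrow> 'a::field_char_0 set" where
  "Ints_div_pow p = {of_int a / of_nat p ^ k | a k. True}"

lemma of_int_in_Ints_div_pow [simp]: "of_int a \<in> Ints_div_pow p"
  unfolding Ints_div_pow_def by (rule CollectI, rule exI[of _ a], rule exI[of _ 0]) simp

lemma zero_in_Ints_div_pow [simp]: "0 \<in> Ints_div_pow p"
  using of_int_in_Ints_div_pow[of 0 p] by simp

lemma one_in_Ints_div_pow [simp]: "1 \<in> Ints_div_pow p"
  using of_int_in_Ints_div_pow[of 1 p] by simp

lemma Ints_div_pow_add:
  assumes "p > 0" "x \<in> Ints_div_pow p" "y \<in> Ints_div_pow p"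
  shows "x + y \<in> Ints_div_pow p"
proof -
  obtain a k b l where x: "x = of_int a / of_nat p ^ k" and y: "y = of_int b / of_nat p ^ l"
    using assms(2,3) unfolding Ints_div_pow_def by blast
  have "x + y = of_int (a * int p ^ l + b * int p ^ k) / of_nat p ^ (k + l)"
    using assms(1) by (simp add: x y field_simps power_add)
  then show ?thesis unfolding Ints_div_pow_def by blast
qed

lemma Ints_div_pow_mult:
  assumes "p > 0" "x \<in> Ints_div_pow p" "y \<in> Ints_div_pow p"
  shows "x * y \<in> Ints_div_pow p"
proof -
  obtain a k b l where x: "x = of_int a / of_nat p ^ k" and y: "y = of_int b / of_nat p ^ l"
    using assms(2,3) unfolding Ints_div_pow_def by blast
  have "x * y = of_int (a * b) / of_nat p ^ (k + l)"
    using assms(1) by (simp add: x y field_simps power_add)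
  then show ?thesis unfolding Ints_div_pow_def by blast
qed

lemma Ints_div_pow_diff:
  assumes "p > 0" "x \<in> Ints_div_pow p" "y \<in> Ints_div_pow p"
  shows "x - y \<in> Ints_div_pow p"
proof -
  have "- 1 * y \<in> Ints_div_pow p"
    using Ints_div_pow_mult[OF assms(1) of_int_in_Ints_div_pow[of "- 1"] assms(3)] by simp
  from Ints_div_pow_add[OF assms(1,2) this] show ?thesis by simp
qed

lemma Ints_div_pow_divide_pow:
  assumes "x \<in> Ints_div_pow p"
  shows "x / of_nat p ^ e \<in> Ints_div_pow p"
proof -
  obtain a k where "x = of_int a / of_nat p ^ k"
    using assms unfolding Ints_div_pow_def by blast
  then have "x / of_nat p ^ e = of_int a / of_nat p ^ (k + e)"
    by (simp add: power_add)
  then show ?thesis unfolding Ints_div_pow_def by blast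
qed

lemma Ints_div_pow_sum:
  assumes "p > 0" "\<And>i. i \<in> A \<Longrightarrow> f i \<in> Ints_div_pow p"
  shows "sum f A \<in> Ints_div_pow p"
  using assms(2)
  by (induction A rule: infinite_finite_induct) (auto intro: Ints_div_pow_add[OF assms(1)])

definition fps_coeffs_in :: "'a set \<Rightarrow> 'a::zero fps \<Rightarrow> bool" where
  "fps_coeffs_in S F \<longleftrightarrow> (\<forall>n. F $ n \<in> S)"

lemma fps_coeffs_in_Ints_div_pow_mult:
  assumes "p > 0" "fps_coeffs_in (Ints_div_pow p) F" "fps_coeffs_in (Ints_div_pow p) G"
  shows "fps_coeffs_in (Ints_div_pow p) (F * G)"
  using assms unfolding fps_coeffs_in_def
  by (auto simp: fps_mult_nth intro!: Ints_div_pow_sum Ints_div_pow_mult)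

lemma fps_coeffs_in_Ints_div_pow_one: "fps_coeffs_in (Ints_div_pow p) 1"
  unfolding fps_coeffs_in_def by (simp add: fps_one_nth)

lemma fps_coeffs_in_Ints_div_pow_prod:
  assumes "p > 0" "\<And>i. i \<in> A \<Longrightarrow> fps_coeffs_in (Ints_div_pow p) (F i)"
  shows "fps_coeffs_in (Ints_div_pow p) (prod F A)"
  using assms(2)
  by (induction A rule: infinite_finite_induct)
     (auto intro: fps_coeffs_in_Ints_div_pow_one fps_coeffs_in_Ints_div_pow_mult[OF assms(1)])

lemma fps_coeffs_in_Ints_div_pow_power:
  assumes "p > 0" "fps_coeffs_in (Ints_div_pow p) F"
  shows "fps_coeffs_in (Ints_div_pow p) (F ^ m)"
  using fps_coeffs_in_Ints_div_pow_prod[OF assms(1), of "{..<m}" "\<lambda>_. F"] assms(2) by simp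

lemma fps_mult_nth_vanishing_below:
  fixes F E :: "'a::comm_ring_1 fps"
  assumes "\<And>k. k < n \<Longrightarrow> E $ k = 0"
  shows "k < n \<Longrightarrow> (F * E) $ k = 0" and "(F * E) $ n = F $ 0 * E $ n"
proof -
  show "k < n \<Longrightarrow> (F * E) $ k = 0"
    using assms by (auto simp: fps_mult_nth intro!: sum.neutral)
  have "(F * E) $ n = (\<Sum>i \<in> {0..n}. F $ i * E $ (n - i))"
    by (simp add: fps_mult_nth)
  also have "\<dots> = (\<Sum>i \<in> {0}. F $ i * E $ (n - i))"
    using assms by (intro sum.mono_neutral_right) auto
  finally show "(F * E) $ n = F $ 0 * E $ n" by simp
qed

lemma fps_nth_power_perturb:
  fixes A B :: "'a::comm_ring_1 fps"
  assumes agree: "\<And>k. k < n \<Longrightarrow> A $ k = B $ k" and "B $ n = 0" "n > 0" "A $ 0 = 1"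
  shows "(A ^ m) $ n = (B ^ m) $ n + of_nat m * A $ n"
proof -
  have "(\<forall>k<n. (A ^ m - B ^ m) $ k = 0) \<and> (A ^ m - B ^ m) $ n = of_nat m * A $ n"
  proof (induction m)
    case 0
    then show ?case by simp
  next
    case (Suc m)
    have "B $ 0 = 1" using agree[of 0] assms(3,4) by simp
    then have B_power_0: "(B ^ m) $ 0 = 1" by (simp add: fps_nth_power_0)
    have "A ^ Suc m - B ^ Suc m = A * (A ^ m - B ^ m) + B ^ m * (A - B)"
      by (simp add: algebra_simps)
    moreover note fps_mult_nth_vanishing_below[where n = n and E = "A ^ m - B ^ m" and F = A]
      fps_mult_nth_vanishing_below[where n = n and E = "A - B" and F = "B ^ m"]
    ultimately show ?case using Suc.IH agree assms(2,4) B_power_0 by (auto simp: algebra_simps)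
  qed
  then show ?thesis by (simp add: algebra_simps)
qed

lemma fps_coeffs_in_Ints_div_pow_root:
  fixes G :: "'a::field_char_0 fps"
  assumes p: "p > 0" and G0: "G $ 0 = 1" and power: "fps_coeffs_in (Ints_div_pow p) (G ^ p ^ e)"
  shows "fps_coeffs_in (Ints_div_pow p) G"
  unfolding fps_coeffs_in_def
proof
  fix n
  show "G $ n \<in> Ints_div_pow p"
  proof (induction n rule: less_induct)
    case (less n)
    show ?case
    proof (cases "n = 0")
      case True
      then show ?thesis using G0 by simp
    next
      case False
      define B where "B = Abs_fps (\<lambda>k. if k < n then G $ k else 0)"
      have "fps_coeffs_in (Ints_div_pow p) B"
        unfolding fps_coeffs_in_def B_def using less by simp
      then have "(G ^ p ^ e) $ n - (B ^ p ^ e) $ n \<in> Ints_div_pow p"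
        using power fps_coeffs_in_Ints_div_pow_power[OF p] p
        unfolding fps_coeffs_in_def by (blast intro: Ints_div_pow_diff)
      moreover have "(G ^ p ^ e) $ n = (B ^ p ^ e) $ n + of_nat (p ^ e) * G $ n"
        by (rule fps_nth_power_perturb) (use False G0 in \<open>auto simp: B_def\<close>)
      ultimately have "of_nat p ^ e * G $ n \<in> Ints_div_pow p"
        by simp
      from Ints_div_pow_divide_pow[OF this, of e] show ?thesis using p by simp
    qed
  qed
qed

lemma fps_coeffs_in_Ints_div_pow_binomial:
  assumes "p > 0"
  shows "fps_coeffs_in (Ints_div_pow p)
           (fps_binomial (- 1 / of_nat (p ^ e) :: 'a::field_char_0))"
proof (rule fps_coeffs_in_Ints_div_pow_root[OF assms])
  have "((- 1 :: 'a) gchoose n) = of_int ((- 1) ^ n)" for n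
    by (subst gbinomial_negated_upper) (simp add: binomial_gbinomial[symmetric])
  then have "fps_coeffs_in (Ints_div_pow p) (fps_binomial (- 1 :: 'a))"
    unfolding fps_coeffs_in_def by (simp del: of_int_power)
  moreover have "fps_binomial (- 1 / of_nat (p ^ e) :: 'a) ^ p ^ e = fps_binomial (- 1)"
    using assms by (simp add: fps_binomial_power)
  ultimately show
    "fps_coeffs_in (Ints_div_pow p) (fps_binomial (- 1 / of_nat (p ^ e) :: 'a) ^ p ^ e)"
    by simp
qed simp

lemma fps_compose_neg_X_power_nth:
  fixes F :: "'a::comm_ring_1 fps"
  assumes "M > 0"
  shows "(F oo - (fps_X ^ M)) $ k = (if M dvd k then (- 1) ^ (k div M) * F $ (k div M) else 0)"
proof -
  have power_nth: "((- (fps_X ^ M)) ^ i :: 'a fps) $ k = (if k = M * i then (- 1) ^ i else 0)" for i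
  proof -
    have "(- (fps_X ^ M)) ^ i = (- 1) ^ i * ((fps_X :: 'a fps) ^ M) ^ i"
      by (rule power_minus)
    also have "\<dots> = fps_const ((- 1) ^ i) * fps_X ^ (M * i)"
      by (simp flip: fps_const_power power_mult)
    finally show ?thesis
      by (simp only: fps_mult_left_const_nth fps_X_power_nth) simp
  qed
  have "(F oo - (fps_X ^ M)) $ k = (\<Sum>i = 0..k. if k = M * i then (- 1) ^ i * F $ i else 0)"
    unfolding fps_compose_nth power_nth by (intro sum.cong) auto
  also have "\<dots> = (\<Sum>i \<in> {0..k} \<inter> {i. k = M * i}. (- 1) ^ i * F $ i)"
    by (simp add: sum.inter_restrict)
  also have "{0..k} \<inter> {i. k = M * i} = (if M dvd k then {k div M} else {})"
    using assms by (auto elim!: dvdE)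
  finally show ?thesis by simp
qed

definition Tp_factor_fps :: "nat \<Rightarrow> nat \<Rightarrow> complex fps" where
  "Tp_factor_fps p j = fps_binomial (- 1 / of_nat (p ^ Suc j)) oo - (fps_X ^ p ^ Suc j)"

lemma fps_coeffs_in_Tp_factor_fps:
  assumes "p > 0"
  shows "fps_coeffs_in (Ints_div_pow p) (Tp_factor_fps p j)"
proof -
  have "(- 1) ^ m \<in> Ints_div_pow p" for m
    using of_int_in_Ints_div_pow[of "(- 1) ^ m" p] by simp
  then show ?thesis
    using fps_coeffs_in_Ints_div_pow_binomial[OF assms, of "Suc j"] assms
    unfolding fps_coeffs_in_def Tp_factor_fps_def
    by (auto simp: fps_compose_neg_X_power_nth intro!: Ints_div_pow_mult simp del: power_Suc)
qed

lemma Tp_factor_fps_nth_below: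
  assumes "p > 0" "k < p ^ Suc j"
  shows "Tp_factor_fps p j $ k = (if k = 0 then 1 else 0)"
  using assms unfolding Tp_factor_fps_def
  by (auto simp: fps_compose_neg_X_power_nth dest: dvd_imp_le simp del: power_Suc)

lemma fps_nth_prod_Tp_factor_fps_stable:
  assumes p: "p > 1" and "n \<le> N"
  shows "(\<Prod>j<N. Tp_factor_fps p j) $ n = (\<Prod>j<n. Tp_factor_fps p j) $ n"
  using assms(2)
proof (induction N rule: dec_induct)
  case (step N)
  have "n \<le> N" by fact
  also have "N < 2 ^ Suc N" using less_exp[of "Suc N"] by simp
  also have "(2::nat) ^ Suc N \<le> p ^ Suc N" using p by (intro power_mono) auto
  finally have "\<And>k. k < Suc n \<Longrightarrow> (Tp_factor_fps p N - 1) $ k = 0"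
    using p by (simp add: Tp_factor_fps_nth_below del: power_Suc)
  from fps_mult_nth_vanishing_below(1)
    [OF this, where k = n and F = "\<Prod>j<N. Tp_factor_fps p j"]
  have "(\<Prod>j<Suc N. Tp_factor_fps p j) $ n = (\<Prod>j<N. Tp_factor_fps p j) $ n"
    by (simp add: algebra_simps)
  with step.IH show ?case by simp
qed simp

lemma uniform_limit_prodinf_if_summable_bound:
  fixes f :: "nat \<Rightarrow> 'a::topological_space \<Rightarrow> 'b::{real_normed_field, banach}"
  assumes cont: "\<And>n. continuous_on A (f n)" and "compact A" and M: "summable M"
    and bound: "\<And>n x. x \<in> A \<Longrightarrow> norm (f n x - 1) \<le> M n"
  shows "uniform_limit A (\<lambda>N x. \<Prod>n<N. f n x) (\<lambda>x. \<Prod>n. f n x) sequentially"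
proof -
  have "uniformly_convergent_on A (\<lambda>N x. \<Sum>n<N. norm (f n x - 1))"
    using bound M by (intro Weierstrass_m_test') auto
  then have "uniformly_convergent_on A (\<lambda>N x. \<Prod>n<N. f n x)"
    by (rule uniformly_convergent_on_prod'[OF cont \<open>compact A\<close>])
  then obtain g where g: "uniform_limit A (\<lambda>N x. \<Prod>n<N. f n x) g sequentially"
    unfolding uniformly_convergent_on_def by blast
  moreover have "g x = (\<Prod>n. f n x)" if x: "x \<in> A" for x
  proof (rule LIMSEQ_unique)
    show "(\<lambda>N. \<Prod>n<Suc N. f n x) \<longlonglongrightarrow> g x"
      using tendsto_uniform_limitI[OF g x] by (rule LIMSEQ_Suc)
    have "summable (\<lambda>n. norm (f n x - 1))"
      using bound[OF x] by (intro summable_comparison_test'[OF M]) auto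
    then have "convergent_prod (\<lambda>n. f n x)"
      by (intro abs_convergent_prod_imp_convergent_prod summable_imp_abs_convergent_prod)
    then show "(\<lambda>N. \<Prod>n<Suc N. f n x) \<longlonglongrightarrow> (\<Prod>n. f n x)"
      unfolding lessThan_Suc_atMost by (rule convergent_prod_LIMSEQ)
  qed
  ultimately show ?thesis
    by (simp cong: uniform_limit_cong')
qed

lemma norm_one_minus_powr_sub_one_le:
  fixes w c :: complex
  assumes w: "norm w < 1/2" and c: "norm c \<le> 1/2"
  shows "norm ((1 - w) powr c - 1) \<le> 3 * norm c * norm w"
proof -
  define u where "u = c * Ln (1 - w)"
  have "1 - w \<noteq> 0" using w by auto
  then have powr_eq: "(1 - w) powr c = exp u" by (simp add: powr_def u_def)
  have "norm (Ln (1 - w)) \<le> 2 * norm w"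
    using norm_Ln_le[of "- w"] w by simp
  then have u_le: "norm u \<le> norm c * (2 * norm w)"
    unfolding u_def norm_mult by (simp add: mult_left_mono)
  also have "\<dots> \<le> norm w"
    using c mult_left_le_one_le[of "norm w" "2 * norm c"] by (simp add: algebra_simps)
  finally have "norm u \<le> 1/2" using w by simp
  then have "norm (exp u - 1) \<le> 3/2 * norm u" by (rule norm_exp_bounds(2))
  also have "\<dots> \<le> 3 * norm c * norm w" using u_le by simp
  finally show ?thesis unfolding powr_eq .
qed

definition Tp_factor :: "nat \<Rightarrow> nat \<Rightarrow> complex \<Rightarrow> complex" where
  "Tp_factor p j z = (1 - z ^ p ^ Suc j) powr (- 1 / of_nat (p ^ Suc j))"

lemma Tp_eq_prodinf_Tp_factor: "Tp p = (\<lambda>z. \<Prod>j. Tp_factor p j z)"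
  by (simp add: fun_eq_iff Tp_def Tp_factor_def)

lemma has_fps_expansion_Tp_factor:
  assumes "p > 0"
  shows "Tp_factor p j has_fps_expansion Tp_factor_fps p j"
proof -
  have "(\<lambda>z. - (z ^ p ^ Suc j)) has_fps_expansion - (fps_X ^ p ^ Suc j)"
    by (intro has_fps_expansion_minus has_fps_expansion_fps_X_power)
  from has_fps_expansion_compose[OF has_fps_expansion_binomial_complex this]
  have "(\<lambda>z. (1 + - (z ^ p ^ Suc j)) powr (- 1 / of_nat (p ^ Suc j))) has_fps_expansion
      Tp_factor_fps p j"
    using assms unfolding Tp_factor_fps_def o_def by simp
  then show ?thesis
    unfolding Tp_factor_def[abs_def] by simp
qed

lemma holomorphic_on_Tp_factor:
  assumes "p > 0"
  shows "Tp_factor p j holomorphic_on ball 0 1"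
proof -
  have "1 - z ^ p ^ Suc j \<notin> \<real>\<^sub>\<le>\<^sub>0" if "z \<in> ball 0 1" for z :: complex
  proof -
    have "Re (z ^ p ^ Suc j) \<le> norm z ^ p ^ Suc j"
      by (metis complex_Re_le_cmod norm_power)
    also have "\<dots> < 1"
      using that assms by (simp add: power_less_one_iff)
    finally show ?thesis by (simp add: complex_nonpos_Reals_iff)
  qed
  then show ?thesis
    unfolding Tp_factor_def by (intro holomorphic_intros) auto
qed

lemma norm_Tp_factor_sub_one_le:
  assumes p: "p > 1" and z: "norm z \<le> 1/2"
  shows "norm (Tp_factor p j z - 1) \<le> (1/2) ^ j"
proof -
  define M where "M = p ^ Suc j"
  have "Suc j < 2 ^ Suc j" by (rule less_exp)
  also have "(2::nat) ^ Suc j \<le> M" unfolding M_def using p by (intro power_mono) auto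
  finally have M: "Suc j < M" .
  have "norm (z ^ M) \<le> (1/2) ^ M" using z by (simp add: norm_power power_mono)
  also have "\<dots> \<le> (1/2) ^ Suc (Suc j)" using M by (intro power_decreasing) auto
  finally have w: "norm (z ^ M) \<le> (1/2) ^ Suc (Suc j)" .
  have c: "norm (- 1 / of_nat M :: complex) \<le> 1/2"
    using M by (simp add: norm_divide field_simps)
  have "norm (Tp_factor p j z - 1) \<le> 3 * norm (- 1 / of_nat M :: complex) * norm (z ^ M)"
    unfolding Tp_factor_def M_def[symmetric]
  proof (rule norm_one_minus_powr_sub_one_le[OF _ c])
    show "norm (z ^ M) < 1/2" using w power_le_one[of "1/2::real" j] by simp
  qed
  also have "\<dots> \<le> 3 * (1/2) * (1/2) ^ Suc (Suc j)"
    using c w by (intro mult_mono) auto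
  also have "\<dots> \<le> (1/2) ^ j" by simp
  finally show ?thesis .
qed

lemma uniform_limit_Tp:
  assumes p: "p > 1"
  shows "uniform_limit (ball 0 (1/2)) (\<lambda>N z. \<Prod>j<N. Tp_factor p j z) (Tp p) sequentially"
proof -
  have "Tp_factor p j holomorphic_on cball 0 (1/2)" for j
    by (rule holomorphic_on_subset[OF holomorphic_on_Tp_factor]) (use p in auto)
  then have "continuous_on (cball 0 (1/2)) (Tp_factor p j)" for j
    by (rule holomorphic_on_imp_continuous_on)
  then have "uniform_limit (cball 0 (1/2)) (\<lambda>N z. \<Prod>j<N. Tp_factor p j z) (Tp p) sequentially"
    unfolding Tp_eq_prodinf_Tp_factor
    using norm_Tp_factor_sub_one_le[OF p]
    by (intro uniform_limit_prodinf_if_summable_bound[where M = "\<lambda>j. (1/2) ^ j"]) auto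
  then show ?thesis by (rule uniform_limit_on_subset) auto
qed

lemma tp_eq_nth_prod_Tp_factor_fps:
  assumes p: "p > 1"
  shows "tp p n = (\<Prod>j<n. Tp_factor_fps p j) $ n"
proof -
  let ?P = "\<lambda>N z. \<Prod>j<N. Tp_factor p j z"
  have "Tp_factor p j holomorphic_on ball 0 (1/2)" for j
    by (rule holomorphic_on_subset[OF holomorphic_on_Tp_factor]) (use p in auto)
  then have "?P N holomorphic_on ball 0 (1/2)" for N
    by (intro holomorphic_on_prod) auto
  then have "(\<lambda>N. (deriv ^^ n) (?P N) 0) \<longlonglongrightarrow> (deriv ^^ n) (Tp p) 0"
    by (intro higher_deriv_complex_uniform_limit[OF uniform_limit_Tp[OF p]]) auto
  moreover have "(deriv ^^ n) (?P N) 0 = fact n * (\<Prod>j<n. Tp_factor_fps p j) $ n"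
    if "n \<le> N" for N
  proof -
    have "?P N has_fps_expansion (\<Prod>j<N. Tp_factor_fps p j)"
      using has_fps_expansion_Tp_factor p by (intro has_fps_expansion_prod) auto
    from fps_nth_fps_expansion[OF this, of n] show ?thesis
      using fps_nth_prod_Tp_factor_fps_stable[OF p that] by simp
  qed
  then have "(\<lambda>N. (deriv ^^ n) (?P N) 0) \<longlonglongrightarrow> fact n * (\<Prod>j<n. Tp_factor_fps p j) $ n"
    by (intro tendsto_eventually eventually_sequentiallyI)
  ultimately have "(deriv ^^ n) (Tp p) 0 = fact n * (\<Prod>j<n. Tp_factor_fps p j) $ n"
    by (rule LIMSEQ_unique)
  then show ?thesis unfolding tp_def by simp
qed

theorem proposition1p8:
  fixes p n :: nat
  assumes "prime p"
  shows "\<exists>a::int. \<exists>k::nat. tp p n = of_int a / of_nat p ^ k"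
proof -
  have p: "p > 1" using assms by (rule prime_gt_1_nat)
  have "fps_coeffs_in (Ints_div_pow p) (\<Prod>j<n. Tp_factor_fps p j)"
    using p by (intro fps_coeffs_in_Ints_div_pow_prod fps_coeffs_in_Tp_factor_fps) auto
  then have "tp p n \<in> Ints_div_pow p"
    unfolding tp_eq_nth_prod_Tp_factor_fps[OF p] fps_coeffs_in_def by blast
  then show ?thesis unfolding Ints_div_pow_def by blast
qed

end
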